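(* Let $(L,\vee,\wedge,\to,\gets,f,g,0,1)$ be an HBGC-algebra. Then there exists a GC-frame $\mathcal{F}=(X,\leq,R)$ such that $(L,\vee,\wedge,\to,\gets,f,g,0,1)$ is isomorphic to a subalgebra of the complex algebra $\mathbb{HB}_{\rm GC}(\mathcal{F})=(\mathcal{T}_\leq,\cup,\cap,\to,\gets,{}^\blacktriangle,{}^\blacktriangledown,\emptyset,X)$.
   Context: A Heyting–Brouwer algebra $(L,\vee,\wedge,\to,\gets,0,1)$ is a bounded lattice in which for all $a,b$ the relative pseudocomplement $a\to b$ (greatest $x$ with $a\wedge x\leq b$) and the co-implication $a\gets b$ (least $x$ with $b\leq a\vee x$) exist. An HBGC-algebra is a Heyting–Brouwer algebra with maps $f,g\colon L\to L$ forming an order-preserving Galois connection ($f(a)\leq b\iff a\leq g(b)$). A GC-frame $(X,\leq,R)$ is a set $X$ with a quasiorder $\leq$ and a relation $R\subseteq X\times X$ such that $x\leq x'$, $x\,R\,y$, $y'\leq y$ imply $x'\,R\,y'$. $\mathcal{T}_\leq$ is the set of upward $\leq$-closed subsets of $X$. For $A\subseteq X$: $A^\blacktriangle=\{x\mid x\,R\,y\text{ for some }y\in A\}$, $A^\blacktriangledown=\{x\mid y\,R\,x\text{ implies }y\in A\}$. On $\mathcal{T}_\leq$: $A\to B=\{a\in X\mid \forall b\geq a\,(b\in A\Rightarrow b\in B)\}$, $A\gets B=\{a\in X\mid \exists b\leq a\,(b\notin A\text{ and }b\in B)\}$. Isomorphisms preserve $\vee,\wedge,\to,\gets,f,g,0,1$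 with $f\leftrightarrow{}^\blacktriangle$, $g\leftrightarrow{}^\blacktriangledown$. *)

theory Defs
  imports Main
begin

definition HBGC_algebra ::
  "('a::bounded_lattice \<Rightarrow> 'a \<Rightarrow> 'a) \<Rightarrow> ('a \<Rightarrow> 'a \<Rightarrow> 'a) \<Rightarrow> ('a \<Rightarrow> 'a) \<Rightarrow> ('a \<Rightarrow> 'a) \<Rightarrow> bool"
where
  "HBGC_algebra imp coimp f g \<longleftrightarrow>
     (\<forall>a b. inf a (imp a b) \<le> b \<and> (\<forall>x. inf a x \<le> b \<longrightarrow> x \<le> imp a b)) \<and>
     (\<forall>a b. b \<le> sup a (coimp a b) \<and> (\<forall>x. b \<le> sup a x \<longrightarrow> coimp a b \<le> x)) \<and>
     (\<forall>a b. f a \<le> b \<longleftrightarrow> a \<le> g b)"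

definition GC_frame :: "'b set \<Rightarrow> ('b \<Rightarrow> 'b \<Rightarrow> bool) \<Rightarrow> ('b \<Rightarrow> 'b \<Rightarrow> bool) \<Rightarrow> bool" where
  "GC_frame X le R \<longleftrightarrow>
     (\<forall>x\<in>X. le x x) \<and>
     (\<forall>x\<in>X. \<forall>y\<in>X. \<forall>z\<in>X. le x y \<longrightarrow> le y z \<longrightarrow> le x z) \<and>
     (\<forall>x y. R x y \<longrightarrow> x \<in> X \<and> y \<in> X) \<and>
     (\<forall>x y. le x y \<longrightarrow> x \<in> X \<and> y \<in> X) \<and>
     (\<forall>x x' y y'. le x x' \<longrightarrow> R x y \<longrightarrow> le y' y \<longrightarrow> R x' y')"

definition upsets :: "'b set \<Rightarrow> ('b \<Rightarrow> 'b \<Rightarrow> bool) \<Rightarrow> 'b set set" where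
  "upsets X le = {A. A \<subseteq> X \<and> (\<forall>x\<in>A. \<forall>y\<in>X. le x y \<longrightarrow> y \<in> A)}"

definition frame_imp :: "'b set \<Rightarrow> ('b \<Rightarrow> 'b \<Rightarrow> bool) \<Rightarrow> 'b set \<Rightarrow> 'b set \<Rightarrow> 'b set" where
  "frame_imp X le A B = {a\<in>X. \<forall>b\<in>X. le a b \<longrightarrow> b \<in> A \<longrightarrow> b \<in> B}"

definition frame_coimp :: "'b set \<Rightarrow> ('b \<Rightarrow> 'b \<Rightarrow> bool) \<Rightarrow> 'b set \<Rightarrow> 'b set \<Rightarrow> 'b set" where
  "frame_coimp X le A B = {a\<in>X. \<exists>b\<in>X. le b a \<and> b \<notin> A \<and> b \<in> B}"

definition blackup :: "'b set \<Rightarrow> ('b \<Rightarrow> 'b \<Rightarrow> bool) \<Rightarrow> 'b set \<Rightarrow> 'b set" where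
  "blackup X R A = {x\<in>X. \<exists>y\<in>A. R x y}"

definition blackdown :: "'b set \<Rightarrow> ('b \<Rightarrow> 'b \<Rightarrow> bool) \<Rightarrow> 'b set \<Rightarrow> 'b set" where
  "blackdown X R A = {x\<in>X. \<forall>y\<in>X. R y x \<longrightarrow> y \<in> A}"

text \<open>An embedding of the HBGC-algebra into the complex algebra of the frame, i.e. an
  isomorphism onto a subalgebra (its image).\<close>

definition HBGC_embedding ::
  "('a::bounded_lattice \<Rightarrow> 'a \<Rightarrow> 'a) \<Rightarrow> ('a \<Rightarrow> 'a \<Rightarrow> 'a) \<Rightarrow> ('a \<Rightarrow> 'a) \<Rightarrow> ('a \<Rightarrow> 'a) \<Rightarrow>
   'b set \<Rightarrow> ('b \<Rightarrow> 'b \<Rightarrow> bool) \<Rightarrow> ('b \<Rightarrow> 'b \<Rightarrow> bool) \<Rightarrow> ('a \<Rightarrow> 'b set) \<Rightarrow> bool"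
where
  "HBGC_embedding imp coimp f g X le R h \<longleftrightarrow>
     inj h \<and>
     (\<forall>a. h a \<in> upsets X le) \<and>
     (\<forall>a b. h (sup a b) = h a \<union> h b) \<and>
     (\<forall>a b. h (inf a b) = h a \<inter> h b) \<and>
     (\<forall>a b. h (imp a b) = frame_imp X le (h a) (h b)) \<and>
     (\<forall>a b. h (coimp a b) = frame_coimp X le (h a) (h b)) \<and>
     (\<forall>a. h (f a) = blackup X R (h a)) \<and>
     (\<forall>a. h (g a) = blackdown X R (h a)) \<and>
     h bot = {} \<and> h top = X"

end

theory Submission
  imports Defs
begin

text \<open>The frame is the set of prime filters of \<open>L\<close>, ordered by inclusion, with \<open>x R y\<close> iff
  \<open>f[y] \<subseteq> x\<close>, and \<open>a\<close> is sent to the prime filters containing it (Stone's representation).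
  Every operation of \<open>L\<close> is one side of a Galois connection: \<open>g\<close> and \<open>a \<rightarrow> -\<close> are right adjoints
  (of \<open>f\<close> and \<open>a \<sqinter> -\<close>), \<open>f\<close> and \<open>a \<leftarrow> -\<close> are left adjoints (of \<open>g\<close> and \<open>a \<squnion> -\<close>).
  A right adjoint \<open>\<psi>\<close> satisfies \<open>\<psi> d \<in> x\<close> iff \<open>d\<close> lies in every prime filter containing \<open>\<phi>[x]\<close>, and a
  left adjoint \<open>\<phi>\<close> satisfies \<open>\<phi> c \<in> x\<close> iff some prime filter \<open>P \<ni> c\<close> has \<open>\<phi>[P] \<subseteq> x\<close>; the
  nontrivial directions are instances of the prime filter theorem, which applies because the
  existence of \<open>\<rightarrow>\<close> makes \<open>L\<close> distributive.\<close>

definition lattice_filter :: "'a::bounded_lattice set \<Rightarrow> bool" where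
  "lattice_filter F \<longleftrightarrow>
     top \<in> F \<and> (\<forall>a\<in>F. \<forall>b\<in>F. inf a b \<in> F) \<and> (\<forall>a b. a \<in> F \<longrightarrow> a \<le> b \<longrightarrow> b \<in> F)"

definition lattice_ideal :: "'a::bounded_lattice set \<Rightarrow> bool" where
  "lattice_ideal I \<longleftrightarrow>
     bot \<in> I \<and> (\<forall>a\<in>I. \<forall>b\<in>I. sup a b \<in> I) \<and> (\<forall>a b. a \<in> I \<longrightarrow> b \<le> a \<longrightarrow> b \<in> I)"

definition prime_filter :: "'a::bounded_lattice set \<Rightarrow> bool" where
  "prime_filter P \<longleftrightarrow>
     lattice_filter P \<and> bot \<notin> P \<and> (\<forall>a b. sup a b \<in> P \<longrightarrow> a \<in> P \<or> b \<in> P)"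

lemma prime_filter_top: "prime_filter P \<Longrightarrow> top \<in> P"
  unfolding prime_filter_def lattice_filter_def by blast

lemma prime_filter_bot: "prime_filter P \<Longrightarrow> bot \<notin> P"
  unfolding prime_filter_def by blast

lemma prime_filter_mono: "prime_filter P \<Longrightarrow> a \<in> P \<Longrightarrow> a \<le> b \<Longrightarrow> b \<in> P"
  unfolding prime_filter_def lattice_filter_def by blast

lemma prime_filter_inf_iff: "prime_filter P \<Longrightarrow> inf a b \<in> P \<longleftrightarrow> a \<in> P \<and> b \<in> P"
  unfolding prime_filter_def lattice_filter_def by (meson inf_le1 inf_le2)

lemma prime_filter_sup_iff: "prime_filter P \<Longrightarrow> sup a b \<in> P \<longleftrightarrow> a \<in> P \<or> b \<in> P"
  unfolding prime_filter_def lattice_filter_def by (meson sup_ge1 sup_ge2)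

lemma lattice_filter_principal: "lattice_filter {c. a \<le> c}"
  unfolding lattice_filter_def by auto

lemma lattice_ideal_principal: "lattice_ideal {c. c \<le> b}"
  unfolding lattice_ideal_def by auto

lemma lattice_ideal_Compl_prime_filter: "prime_filter P \<Longrightarrow> lattice_ideal (- P)"
  unfolding lattice_ideal_def by (auto simp: prime_filter_bot prime_filter_sup_iff prime_filter_mono)

lemma lattice_filter_upclosure_image:
  fixes \<phi> :: "'a::bounded_lattice \<Rightarrow> 'a"
  assumes "mono \<phi>" and "lattice_filter F"
  shows "lattice_filter {c. \<exists>b\<in>F. \<phi> b \<le> c}"
  unfolding lattice_filter_def
proof (intro conjI ballI allI impI)
  show "top \<in> {c. \<exists>b\<in>F. \<phi> b \<le> c}"
    using \<open>lattice_filter F\<close> unfolding lattice_filter_def by auto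
next
  fix c1 c2 assume "c1 \<in> {c. \<exists>b\<in>F. \<phi> b \<le> c}" "c2 \<in> {c. \<exists>b\<in>F. \<phi> b \<le> c}"
  then obtain b1 b2 where b: "b1 \<in> F" "\<phi> b1 \<le> c1" "b2 \<in> F" "\<phi> b2 \<le> c2" by blast
  have "inf b1 b2 \<in> F" using \<open>lattice_filter F\<close> b unfolding lattice_filter_def by blast
  moreover have "\<phi> (inf b1 b2) \<le> inf c1 c2"
    using monoD[OF \<open>mono \<phi>\<close>, of "inf b1 b2"] b(2,4) by (meson inf_le1 inf_le2 le_inf_iff order_trans)
  ultimately show "inf c1 c2 \<in> {c. \<exists>b\<in>F. \<phi> b \<le> c}" by blast
next
  fix c c' assume "c \<in> {c. \<exists>b\<in>F. \<phi> b \<le> c}" "c \<le> c'"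
  then show "c' \<in> {c. \<exists>b\<in>F. \<phi> b \<le> c}" using order_trans by blast
qed

lemma lattice_filter_Union_chain:
  assumes "C \<noteq> {}" and filters: "\<forall>F\<in>C. lattice_filter F"
    and chain: "\<forall>F\<in>C. \<forall>G\<in>C. F \<subseteq> G \<or> G \<subseteq> F"
  shows "lattice_filter (\<Union>C)"
  unfolding lattice_filter_def
proof (intro conjI ballI allI impI)
  show "top \<in> \<Union>C" using \<open>C \<noteq> {}\<close> filters unfolding lattice_filter_def by blast
next
  fix a b assume "a \<in> \<Union>C" "b \<in> \<Union>C"
  then obtain F G where "F \<in> C" "a \<in> F" "G \<in> C" "b \<in> G" by blast
  then obtain H where H: "H \<in> C" "a \<in> H" "b \<in> H" using chain by blast
  then have "inf a b \<in> H" using filters unfolding lattice_filter_def by blast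
  then show "inf a b \<in> \<Union>C" using H by blast
next
  fix a b assume "a \<in> \<Union>C" "a \<le> b"
  then obtain F where "F \<in> C" "a \<in> F" by blast
  then have "b \<in> F" using filters \<open>a \<le> b\<close> unfolding lattice_filter_def by blast
  then show "b \<in> \<Union>C" using \<open>F \<in> C\<close> by blast
qed
lemma maximal_disjoint_filter_prime:
  fixes M I :: "'a::bounded_lattice set"
  assumes distrib: "\<And>a b c :: 'a. inf a (sup b c) \<le> sup (inf a b) (inf a c)"
    and I: "lattice_ideal I" and M: "lattice_filter M" "M \<inter> I = {}"
    and maximal: "\<And>G. lattice_filter G \<Longrightarrow> M \<subseteq> G \<Longrightarrow> G \<inter> I = {} \<Longrightarrow> G = M"
  shows "prime_filter M"
proof -
  have escape: "\<exists>m\<in>M. \<exists>i\<in>I. inf m a \<le> i" if "a \<notin> M" for a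
  proof -
    let ?G = "{c. \<exists>m\<in>M. inf m a \<le> c}"
    have "lattice_filter ?G"
      by (rule lattice_filter_upclosure_image) (auto intro: monoI inf_mono M(1))
    moreover have "M \<subseteq> ?G" using inf_le1 by blast
    moreover have "a \<in> ?G" using M(1) unfolding lattice_filter_def by auto
    ultimately have "?G \<inter> I \<noteq> {}" using maximal that by blast
    then show ?thesis by blast
  qed
  have "a \<in> M \<or> b \<in> M" if "sup a b \<in> M" for a b
  proof (rule ccontr)
    assume "\<not> (a \<in> M \<or> b \<in> M)"
    then obtain m1 i1 m2 i2 where
      m: "m1 \<in> M" "m2 \<in> M" and i: "i1 \<in> I" "i2 \<in> I" and "inf m1 a \<le> i1" "inf m2 b \<le> i2"
      using escape by meson
    then have "inf (inf m1 m2) a \<le> i1" "inf (inf m1 m2) b \<le> i2"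
      by (meson inf_le1 inf_le2 inf_mono order_trans order_refl)+
    then have "inf (inf m1 m2) (sup a b) \<le> sup i1 i2"
      using distrib sup_mono order_trans by blast
    moreover have "inf (inf m1 m2) (sup a b) \<in> M"
      using M(1) m that unfolding lattice_filter_def by blast
    moreover have "sup i1 i2 \<in> I" using I i unfolding lattice_ideal_def by blast
    ultimately show False using I M(2) unfolding lattice_ideal_def by blast
  qed
  moreover have "bot \<notin> M" using I M(2) unfolding lattice_ideal_def by blast
  ultimately show ?thesis using M(1) unfolding prime_filter_def by blast
qed

theorem prime_filter_exists:
  fixes F I :: "'a::bounded_lattice set"
  assumes distrib: "\<And>a b c :: 'a. inf a (sup b c) \<le> sup (inf a b) (inf a c)"
    and F: "lattice_filter F" and I: "lattice_ideal I" and disjoint: "F \<inter> I = {}"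
  shows "\<exists>P. prime_filter P \<and> F \<subseteq> P \<and> P \<inter> I = {}"
proof -
  let ?A = "{G. lattice_filter G \<and> F \<subseteq> G \<and> G \<inter> I = {}}"
  have "\<exists>M\<in>?A. \<forall>G\<in>?A. M \<subseteq> G \<longrightarrow> G = M"
  proof (rule subset_Zorn_nonempty)
    show "?A \<noteq> {}" using F disjoint by blast
  next
    fix C assume "C \<noteq> {}" and "subset.chain ?A C"
    then have "lattice_filter (\<Union>C)"
      by (intro lattice_filter_Union_chain) (auto simp: subset_chain_def)
    then show "\<Union>C \<in> ?A" using \<open>C \<noteq> {}\<close> \<open>subset.chain ?A C\<close> by (auto simp: subset_chain_def)
  qed
  then obtain M where M: "M \<in> ?A" and maximal: "\<forall>G\<in>?A. M \<subseteq> G \<longrightarrow> G = M" ..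
  have "prime_filter M"
    using M maximal by (intro maximal_disjoint_filter_prime[OF distrib I]) auto
  then show ?thesis using M by blast
qed

lemma prime_filter_separation:
  fixes a b :: "'a::bounded_lattice"
  assumes distrib: "\<And>a b c :: 'a. inf a (sup b c) \<le> sup (inf a b) (inf a c)"
    and "\<not> a \<le> b"
  shows "\<exists>P. prime_filter P \<and> a \<in> P \<and> b \<notin> P"
proof -
  have "{c. a \<le> c} \<inter> {c. c \<le> b} = {}" using \<open>\<not> a \<le> b\<close> order_trans by blast
  then show ?thesis
    using prime_filter_exists[OF distrib lattice_filter_principal lattice_ideal_principal] by blast
qed

lemma left_adjoint_mono:
  assumes adj: "\<And>x y. \<phi> x \<le> y \<longleftrightarrow> x \<le> \<psi> y"
  shows "mono \<phi>"
  by (metis adj monoI order_refl order_trans)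

lemma left_adjoint_bot:
  fixes \<phi> :: "'a::bounded_lattice \<Rightarrow> 'b::bounded_lattice"
  assumes adj: "\<And>x y. \<phi> x \<le> y \<longleftrightarrow> x \<le> \<psi> y"
  shows "\<phi> bot = bot"
  using adj[of bot bot] by (simp add: bot_unique)

lemma left_adjoint_sup:
  fixes \<phi> :: "'a::bounded_lattice \<Rightarrow> 'b::bounded_lattice"
  assumes adj: "\<And>x y. \<phi> x \<le> y \<longleftrightarrow> x \<le> \<psi> y"
  shows "\<phi> (sup a b) = sup (\<phi> a) (\<phi> b)"
proof (rule antisym)
  show "\<phi> (sup a b) \<le> sup (\<phi> a) (\<phi> b)" by (metis adj le_sup_iff sup_ge1 sup_ge2)
  show "sup (\<phi> a) (\<phi> b) \<le> \<phi> (sup a b)"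
    using monoD[OF left_adjoint_mono[OF adj]] by simp
qed

lemma lattice_ideal_vimage_left_adjoint:
  fixes \<phi> :: "'a::bounded_lattice \<Rightarrow> 'b::bounded_lattice"
  assumes adj: "\<And>x y. \<phi> x \<le> y \<longleftrightarrow> x \<le> \<psi> y" and "lattice_ideal I"
  shows "lattice_ideal (\<phi> -` I)"
  using \<open>lattice_ideal I\<close> monoD[OF left_adjoint_mono[OF adj]]
  unfolding lattice_ideal_def by (simp add: left_adjoint_bot[OF adj] left_adjoint_sup[OF adj])

lemma right_adjoint_mem_prime_filter_iff:
  fixes \<phi> \<psi> :: "'a::bounded_lattice \<Rightarrow> 'a"
  assumes distrib: "\<And>a b c :: 'a. inf a (sup b c) \<le> sup (inf a b) (inf a c)"
    and adj: "\<And>x y. \<phi> x \<le> y \<longleftrightarrow> x \<le> \<psi> y" and x: "prime_filter x"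
  shows "\<psi> d \<in> x \<longleftrightarrow> (\<forall>P. prime_filter P \<longrightarrow> \<phi> ` x \<subseteq> P \<longrightarrow> d \<in> P)"
proof
  assume "\<psi> d \<in> x"
  then show "\<forall>P. prime_filter P \<longrightarrow> \<phi> ` x \<subseteq> P \<longrightarrow> d \<in> P"
    using adj prime_filter_mono by blast
next
  assume extending: "\<forall>P. prime_filter P \<longrightarrow> \<phi> ` x \<subseteq> P \<longrightarrow> d \<in> P"
  show "\<psi> d \<in> x"
  proof (rule ccontr)
    assume "\<psi> d \<notin> x"
    let ?F = "{c. \<exists>b\<in>x. \<phi> b \<le> c}"
    have "lattice_filter ?F"
      using lattice_filter_upclosure_image[OF left_adjoint_mono[OF adj]] x
      unfolding prime_filter_def by blast
    moreover have "?F \<inter> {c. c \<le> d} = {}"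
      using \<open>\<psi> d \<notin> x\<close> adj x prime_filter_mono order_trans by blast
    ultimately obtain P where "prime_filter P" "?F \<subseteq> P" "d \<notin> P"
      using prime_filter_exists[OF distrib _ lattice_ideal_principal] by blast
    then show False using extending by blast
  qed
qed

lemma left_adjoint_mem_prime_filter_iff:
  fixes \<phi> \<psi> :: "'a::bounded_lattice \<Rightarrow> 'a"
  assumes distrib: "\<And>a b c :: 'a. inf a (sup b c) \<le> sup (inf a b) (inf a c)"
    and adj: "\<And>x y. \<phi> x \<le> y \<longleftrightarrow> x \<le> \<psi> y" and x: "prime_filter x"
  shows "\<phi> c \<in> x \<longleftrightarrow> (\<exists>P. prime_filter P \<and> c \<in> P \<and> \<phi> ` P \<subseteq> x)"
proof
  assume "\<phi> c \<in> x"
  have "lattice_ideal (\<phi> -` (- x))"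
    by (rule lattice_ideal_vimage_left_adjoint[OF adj lattice_ideal_Compl_prime_filter[OF x]])
  moreover have "{b. c \<le> b} \<inter> \<phi> -` (- x) = {}"
    using \<open>\<phi> c \<in> x\<close> x monoD[OF left_adjoint_mono[OF adj]] prime_filter_mono by blast
  ultimately obtain P where "prime_filter P" "{b. c \<le> b} \<subseteq> P" "P \<inter> \<phi> -` (- x) = {}"
    using prime_filter_exists[OF distrib lattice_filter_principal] by blast
  then show "\<exists>P. prime_filter P \<and> c \<in> P \<and> \<phi> ` P \<subseteq> x" by blast
qed blast

definition prime_filters :: "'a::bounded_lattice set set" where
  "prime_filters = {P. prime_filter P}"

definition prime_filter_le :: "'a::bounded_lattice set \<Rightarrow> 'a set \<Rightarrow> bool" where
  "prime_filter_le x y \<longleftrightarrow> prime_filter x \<and> prime_filter y \<and> x \<subseteq> y"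

definition canonical_rel :: "('a::bounded_lattice \<Rightarrow> 'a) \<Rightarrow> 'a set \<Rightarrow> 'a set \<Rightarrow> bool" where
  "canonical_rel f x y \<longleftrightarrow> prime_filter x \<and> prime_filter y \<and> f ` y \<subseteq> x"

definition stone :: "'a::bounded_lattice \<Rightarrow> 'a set set" where
  "stone a = {P. prime_filter P \<and> a \<in> P}"

lemma GC_frame_canonical: "GC_frame prime_filters prime_filter_le (canonical_rel f)"
  unfolding GC_frame_def prime_filters_def prime_filter_le_def canonical_rel_def by blast

lemma stone_upset: "stone a \<in> upsets prime_filters prime_filter_le"
  unfolding upsets_def stone_def prime_filters_def prime_filter_le_def by auto

lemma stone_sup: "stone (sup a b) = stone a \<union> stone b"
  unfolding stone_def using prime_filter_sup_iff by auto

lemma stone_inf: "stone (inf a b) = stone a \<inter> stone b"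
  unfolding stone_def using prime_filter_inf_iff by auto

lemma stone_bot: "stone bot = {}"
  unfolding stone_def using prime_filter_bot by auto

lemma stone_top: "stone top = prime_filters"
  unfolding stone_def prime_filters_def using prime_filter_top by auto

lemma inj_stone:
  assumes distrib: "\<And>a b c :: 'a::bounded_lattice. inf a (sup b c) \<le> sup (inf a b) (inf a c)"
  shows "inj (stone :: 'a \<Rightarrow> 'a set set)"
proof (rule injI)
  have le: "a \<le> b" if "stone a \<subseteq> stone b" for a b :: 'a
    using prime_filter_separation[OF distrib, of a b] that unfolding stone_def by blast
  fix a b :: 'a assume "stone a = stone b"
  then show "a = b" using le by (simp add: antisym)
qed

lemma stone_imp:
  fixes imp :: "'a::bounded_lattice \<Rightarrow> 'a \<Rightarrow> 'a"
  assumes distrib: "\<And>a b c :: 'a. inf a (sup b c) \<le> sup (inf a b) (inf a c)"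
    and residuated: "\<And>a x b. inf a x \<le> b \<longleftrightarrow> x \<le> imp a b"
  shows "stone (imp a b) = frame_imp prime_filters prime_filter_le (stone a) (stone b)"
proof -
  have inf_image: "inf a ` x \<subseteq> P \<longleftrightarrow> x \<subseteq> P \<and> a \<in> P" if "prime_filter x" "prime_filter P" for x P
    using that prime_filter_top[of x] prime_filter_inf_iff[of P] by (auto simp: image_subset_iff)
  show ?thesis
    unfolding stone_def frame_imp_def prime_filters_def prime_filter_le_def
    using right_adjoint_mem_prime_filter_iff[OF distrib residuated] inf_image by auto
qed

lemma stone_coimp:
  fixes coimp :: "'a::bounded_lattice \<Rightarrow> 'a \<Rightarrow> 'a"
  assumes distrib: "\<And>a b c :: 'a. inf a (sup b c) \<le> sup (inf a b) (inf a c)"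
    and coresiduated: "\<And>a b x. coimp a b \<le> x \<longleftrightarrow> b \<le> sup a x"
  shows "stone (coimp a b) = frame_coimp prime_filters prime_filter_le (stone a) (stone b)"
proof -
  have coimp_image: "coimp a ` y \<subseteq> x \<longleftrightarrow> y \<subseteq> x \<and> a \<notin> y"
    if x: "prime_filter x" and y: "prime_filter y" for x y
  proof
    assume sub: "coimp a ` y \<subseteq> x"
    have "coimp a a \<le> bot" "\<And>c. coimp a c \<le> c" by (simp_all add: coresiduated)
    then show "y \<subseteq> x \<and> a \<notin> y"
      using sub x prime_filter_bot prime_filter_mono by (metis image_subset_iff subsetI)
  next
    assume "y \<subseteq> x \<and> a \<notin> y"
    moreover have "sup a (coimp a c) \<in> y" if "c \<in> y" for c
      using prime_filter_mono[OF y that] coresiduated by blast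
    ultimately show "coimp a ` y \<subseteq> x" using prime_filter_sup_iff[OF y] by blast
  qed
  have "coimp a b \<in> x \<longleftrightarrow> (\<exists>y. prime_filter y \<and> y \<subseteq> x \<and> a \<notin> y \<and> b \<in> y)"
    if "prime_filter x" for x
    using left_adjoint_mem_prime_filter_iff[OF distrib coresiduated that] coimp_image[OF that]
    by metis
  then show ?thesis
    unfolding stone_def frame_coimp_def prime_filters_def prime_filter_le_def by auto
qed

lemma stone_f:
  fixes f g :: "'a::bounded_lattice \<Rightarrow> 'a"
  assumes distrib: "\<And>a b c :: 'a. inf a (sup b c) \<le> sup (inf a b) (inf a c)"
    and gc: "\<And>a b. f a \<le> b \<longleftrightarrow> a \<le> g b"
  shows "stone (f a) = blackup prime_filters (canonical_rel f) (stone a)"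
  unfolding stone_def blackup_def prime_filters_def canonical_rel_def
  using left_adjoint_mem_prime_filter_iff[OF distrib gc] by auto

lemma stone_g:
  fixes f g :: "'a::bounded_lattice \<Rightarrow> 'a"
  assumes distrib: "\<And>a b c :: 'a. inf a (sup b c) \<le> sup (inf a b) (inf a c)"
    and gc: "\<And>a b. f a \<le> b \<longleftrightarrow> a \<le> g b"
  shows "stone (g a) = blackdown prime_filters (canonical_rel f) (stone a)"
  unfolding stone_def blackdown_def prime_filters_def canonical_rel_def
  using right_adjoint_mem_prime_filter_iff[OF distrib gc] by auto

lemma HBGC_algebra_iff_adjunctions:
  "HBGC_algebra imp coimp f g \<longleftrightarrow>
     (\<forall>a x b. inf a x \<le> b \<longleftrightarrow> x \<le> imp a b) \<and>
     (\<forall>a b x. coimp a b \<le> x \<longleftrightarrow> b \<le> sup a x) \<and>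
     (\<forall>a b. f a \<le> b \<longleftrightarrow> a \<le> g b)"
  unfolding HBGC_algebra_def
  by (meson inf_mono order_refl order_trans sup_mono)

theorem proposition4p3:
  fixes imp coimp :: "'a::bounded_lattice \<Rightarrow> 'a \<Rightarrow> 'a" and f g :: "'a \<Rightarrow> 'a"
  assumes "HBGC_algebra imp coimp f g"
  shows "\<exists>(X :: 'a set set) le R h. GC_frame X le R \<and> HBGC_embedding imp coimp f g X le R h"
proof -
  have residuated: "\<And>a x b. inf a x \<le> b \<longleftrightarrow> x \<le> imp a b"
    and coresiduated: "\<And>a b x. coimp a b \<le> x \<longleftrightarrow> b \<le> sup a x"
    and gc: "\<And>a b. f a \<le> b \<longleftrightarrow> a \<le> g b"
    using assms unfolding HBGC_algebra_iff_adjunctions by blast+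
  have distrib: "\<And>a b c :: 'a. inf a (sup b c) \<le> sup (inf a b) (inf a c)"
    using left_adjoint_sup[OF residuated] by simp
  have "HBGC_embedding imp coimp f g prime_filters prime_filter_le (canonical_rel f) stone"
    unfolding HBGC_embedding_def
    by (simp add: inj_stone[OF distrib] stone_upset stone_sup stone_inf stone_bot stone_top
        stone_imp[OF distrib residuated] stone_coimp[OF distrib coresiduated]
        stone_f[OF distrib gc] stone_g[OF distrib gc])
  then show ?thesis using GC_frame_canonical by blast
qed

end
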